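(* In the setting described in the context, let $\Delta'$ be the orthogonal projector onto $\operatorname{span}\{\ket{\psi_x'}:f(x)=1\}$ and $R=2\Delta'-I$. If $\varepsilon\kappa<1/12$, then for every $x$ with $f(x)=0$, $\|(I+R)\ket{\phi_x'}\|\le 8\varepsilon(c+1)A\sqrt{\kappa}$.
   Context: Let $X\subseteq\{0,1\}^n$, $f:X\to\{0,1\}$, $c>0$, and let $\{\ket{v_{x,i}}\in\mathbb{R}^m\}_{x\in X,i\in[n]}$ be a real $f$-deciding vector set, i.e. $\sum_{i:x_i\ne y_i}\braket{v_{x,i}}{v_{y,i}}=1$ whenever $f(x)\ne f(y)$, with size $A=\max_x\sum_i\|\ket{v_{x,i}}\|^2$. Let $\mathcal{H}=\mathbb{R}\oplus(\mathbb{R}^n\otimes\mathbb{R}^m\otimes\mathbb{R}^2)$ with $\ket{\hat0}$ a unit vector spanning the first summand. For $f(x)=1$ let $\ket{\psi_x}=\frac{1}{\sqrt{\nu_x}}\big(\ket{\hat0}+\frac{1}{\sqrt{cA}}\sum_i\ket{i}\ket{v_{x,i}}\ket{x_i}\big)$ with $\nu_x$ chosen so $\|\ket{\psi_x}\|=1$; for $f(x)=0$ let $\ket{\phi_x}=\frac{1}{\sqrt{\mu_x}}\big(\ket{\hat0}-\sqrt{cA}\sum_i\ket{i}\ket{v_{x,i}}\ket{\bar x_i}\big)$ with $\mu_x$ chosen so $\|\ket{\phi_x}\|=1$, $\bar x_i=1-x_i$. Let $\kappa=\dim\operatorname{span}\{\ket{\psi_x}:f(x)=1\}$, $\{\ket{\zeta_j}\}_{j\in[\kappa]}$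 an orthonormal basis of it, with fixed real $\alpha_{j,x}$ such that $\ket{\zeta_j}=\sum_{x:f(x)=1}\alpha_{j,x}\ket{\psi_x}$. Let $\ket{C_{j,i,b}}=\sum_{x:f(x)=1,x_i=b}\frac{\alpha_{j,x}}{\sqrt{\nu_x}}\ket{v_{x,i}}$ and $V=\{\ket{C_{j,i,b}}\}_{j,i,b}\cup\{\ket{v_{y,i}}:f(y)=0,i\in[n]\}$. Let $\varepsilon>0$ and $S\in\mathbb{R}^{N\times m}$ satisfy $(1-\varepsilon)\|u-v\|^2\le\|Su-Sv\|^2\le(1+\varepsilon)\|u-v\|^2$ for all $u,v\in V\cup\{0\}$. Let $T=\ket{\hat0}\bra{\hat0}+I_n\otimes S\otimes I_2$ and $\ket{\psi_x'}=T\ket{\psi_x}$, $\ket{\phi_x'}=T\ket{\phi_x}$. *)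

theory Defs
  imports "HOL-Analysis.Analysis"
begin

text \<open>The space H = R (+) (R^n (x) R^m (x) R^2) is modelled as
  real \<times> (real^('n \<times> 'm \<times> bool)); the first component spans |0hat>,
  the index type 'n plays the role of [n], 'm of [m], bool of {0,1}.\<close>

definition ket :: "'n::finite \<Rightarrow> real^'m::finite \<Rightarrow> bool \<Rightarrow> real^('n \<times> 'm \<times> bool)" where
  "ket i w b = (\<chi> p. case p of (i', k, b') \<Rightarrow> if i' = i \<and> b' = b then w $ k else 0)"

definition hat0 :: "real \<times> (real^('n::finite \<times> 'm::finite \<times> bool))" where
  "hat0 = (1, 0)"

definition psi_un :: "real \<Rightarrow> real \<Rightarrow> (('n::finite \<Rightarrow> bool) \<Rightarrow> 'n \<Rightarrow> real^'m::finite) \<Rightarrow> ('n \<Rightarrow> bool)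
    \<Rightarrow> real \<times> (real^('n \<times> 'm \<times> bool))" where
  "psi_un c A v x = hat0 + (0, (1 / sqrt (c * A)) *\<^sub>R (\<Sum>i\<in>UNIV. ket i (v x i) (x i)))"

definition nu :: "real \<Rightarrow> real \<Rightarrow> (('n::finite \<Rightarrow> bool) \<Rightarrow> 'n \<Rightarrow> real^'m::finite) \<Rightarrow> ('n \<Rightarrow> bool) \<Rightarrow> real" where
  "nu c A v x = (norm (psi_un c A v x))\<^sup>2"

definition psi :: "real \<Rightarrow> real \<Rightarrow> (('n::finite \<Rightarrow> bool) \<Rightarrow> 'n \<Rightarrow> real^'m::finite) \<Rightarrow> ('n \<Rightarrow> bool)
    \<Rightarrow> real \<times> (real^('n \<times> 'm \<times> bool))" where
  "psi c A v x = (1 / sqrt (nu c A v x)) *\<^sub>R psi_un c A v x"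

definition phi_un :: "real \<Rightarrow> real \<Rightarrow> (('n::finite \<Rightarrow> bool) \<Rightarrow> 'n \<Rightarrow> real^'m::finite) \<Rightarrow> ('n \<Rightarrow> bool)
    \<Rightarrow> real \<times> (real^('n \<times> 'm \<times> bool))" where
  "phi_un c A v x = hat0 - (0, sqrt (c * A) *\<^sub>R (\<Sum>i\<in>UNIV. ket i (v x i) (\<not> x i)))"

definition mu :: "real \<Rightarrow> real \<Rightarrow> (('n::finite \<Rightarrow> bool) \<Rightarrow> 'n \<Rightarrow> real^'m::finite) \<Rightarrow> ('n \<Rightarrow> bool) \<Rightarrow> real" where
  "mu c A v x = (norm (phi_un c A v x))\<^sup>2"

definition phi :: "real \<Rightarrow> real \<Rightarrow> (('n::finite \<Rightarrow> bool) \<Rightarrow> 'n \<Rightarrow> real^'m::finite) \<Rightarrow> ('n \<Rightarrow> bool)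
    \<Rightarrow> real \<times> (real^('n \<times> 'm \<times> bool))" where
  "phi c A v x = (1 / sqrt (mu c A v x)) *\<^sub>R phi_un c A v x"

text \<open>T = |0hat><0hat| + I_n (x) S (x) I_2, with S an N x m matrix.\<close>
definition Tmap :: "real^'m::finite^'N::finite \<Rightarrow> real \<times> (real^('n::finite \<times> 'm \<times> bool))
    \<Rightarrow> real \<times> (real^('n \<times> 'N \<times> bool))" where
  "Tmap S h = (fst h, \<chi> p. case p of (i, k, b) \<Rightarrow> \<Sum>l\<in>UNIV. S $ k $ l * (snd h) $ (i, l, b))"

definition orth_proj :: "'a::real_inner set \<Rightarrow> 'a \<Rightarrow> 'a" where
  "orth_proj W v = (THE p. p \<in> span W \<and> (\<forall>w\<in>W. inner (v - p) w = 0))"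

end

(* Write g j = T zeta_j and phi' = T phi_y. Since T fixes |0hat> and applies S blockwise,
   <T h, T h'> - <h, h'> is a sum of blockwise distortions of S, each bounded via the
   near-isometry on V and polarisation. For zeta_j, zeta_k this puts the Gram matrix of the
   g j within 3 eps of the identity. The vectors zeta_j and phi_y are orthogonal because the
   vector set is f-deciding, so |<g j, phi'>| is at most the distortion (3/2) eps (c + 1) A.
   For a family that is delta-close to orthonormal with delta kappa <= 1/4, the projection p
   of phi' onto its span satisfies |p|^2 <= (4/3) kappa B^2 when every |<g j, phi'>| <= B:
   compare |p|^2 = <phi', p> with the lower Gram bound and Cauchy-Schwarz on the coefficients.
   Finally (I + R) phi' = 2 p. *)

theory Submission
  imports Defs
begin

definition block :: "real \<times> (real^('n::finite \<times> 'm::finite \<times> bool)) \<Rightarrow> 'n \<Rightarrow> bool \<Rightarrow> real^'m" where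
  "block h i b = (\<chi> k. snd h $ (i, k, b))"

lemma block_add [simp]: "block (h + h') i b = block h i b + block h' i b"
  by (simp add: block_def vec_eq_iff)

lemma block_scaleR [simp]: "block (r *\<^sub>R h) i b = r *\<^sub>R block h i b"
  by (simp add: block_def vec_eq_iff)

lemma block_sum [simp]: "block (\<Sum>x\<in>I. h x) i b = (\<Sum>x\<in>I. block (h x) i b)"
  by (simp add: block_def vec_eq_iff sum_component snd_sum)

lemma block_diff [simp]: "block (h - h') i b = block h i b - block h' i b"
  by (simp add: block_def vec_eq_iff)

lemma block_Pair_scaleR [simp]: "block (a, r *\<^sub>R w) i b = r *\<^sub>R block (a, w) i b"
  by (simp add: block_def vec_eq_iff)

lemma block_hat0 [simp]: "block hat0 i b = 0"
  by (simp add: block_def hat0_def vec_eq_iff)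

lemma block_sum_ket [simp]:
  "block (a, \<Sum>i'\<in>UNIV. ket i' (w i') (x i')) i b = (if x i = b then w i else 0)"
proof -
  have "(\<Sum>i'\<in>UNIV. ket i' (w i') (x i')) $ (i, k, b)
      = (\<Sum>i'\<in>UNIV. if i' = i then (if x i' = b then w i' $ k else 0) else 0)" for k
    unfolding ket_def sum_component by (rule sum.cong) auto
  then show ?thesis
    by (simp add: block_def vec_eq_iff)
qed

lemma inner_block_sum:
  "inner h h' = fst h * fst h' + (\<Sum>i\<in>UNIV. \<Sum>b\<in>UNIV. inner (block h i b) (block h' i b))"
proof -
  have "inner (snd h) (snd h') = (\<Sum>(i, k, b)\<in>UNIV \<times> UNIV \<times> UNIV. snd h $ (i, k, b) * snd h' $ (i, k, b))"
    by (simp add: inner_vec_def UNIV_Times_UNIV)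
  also have "\<dots> = (\<Sum>i\<in>UNIV. \<Sum>k\<in>UNIV. \<Sum>b\<in>UNIV. snd h $ (i, k, b) * snd h' $ (i, k, b))"
    by (simp add: sum.cartesian_product)
  also have "\<dots> = (\<Sum>i\<in>UNIV. \<Sum>b\<in>UNIV. inner (block h i b) (block h' i b))"
    unfolding inner_vec_def block_def by (simp add: sum.swap[where B = "UNIV :: bool set"])
  finally show ?thesis
    by (simp add: inner_prod_def)
qed

lemma fst_Tmap [simp]: "fst (Tmap S h) = fst h"
  by (simp add: Tmap_def)

lemma block_Tmap [simp]: "block (Tmap S h) i b = S *v block h i b"
  by (simp add: Tmap_def block_def matrix_vector_mult_def vec_eq_iff)

lemma linear_Tmap: "linear (Tmap S)"
  by (rule linearI) (auto simp: Tmap_def vec_eq_iff algebra_simps sum.distrib sum_distrib_left)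

lemma norm_sq_block_sum:
  "(norm h)\<^sup>2 = (fst h)\<^sup>2 + (\<Sum>i\<in>UNIV. \<Sum>b\<in>UNIV. (norm (block h i b))\<^sup>2)"
  using inner_block_sum[of h h] by (simp add: dot_square_norm power2_eq_square)

definition near_isometric_on :: "real \<Rightarrow> 'a::real_normed_vector set \<Rightarrow> ('a \<Rightarrow> 'b::real_normed_vector) \<Rightarrow> bool" where
  "near_isometric_on \<epsilon> U L \<longleftrightarrow> (\<forall>u\<in>U. \<forall>w\<in>U.
     (1 - \<epsilon>) * (norm (u - w))\<^sup>2 \<le> (norm (L u - L w))\<^sup>2 \<and> (norm (L u - L w))\<^sup>2 \<le> (1 + \<epsilon>) * (norm (u - w))\<^sup>2)"

text \<open>Polarisation: the three near-isometry conditions for u, w and u - w control the inner product.\<close>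
lemma near_isometric_on_inner:
  fixes L :: "'a::real_inner \<Rightarrow> 'b::real_inner"
  assumes L: "near_isometric_on \<epsilon> U L" and "L 0 = 0" "0 \<in> U" "u \<in> U" "w \<in> U" "0 \<le> \<epsilon>"
  shows "\<bar>inner (L u) (L w) - inner u w\<bar> \<le> 3/2 * \<epsilon> * ((norm u)\<^sup>2 + (norm w)\<^sup>2)"
proof -
  have near: "(1 - \<epsilon>) * (norm (a - b))\<^sup>2 \<le> (norm (L a - L b))\<^sup>2 \<and> (norm (L a - L b))\<^sup>2 \<le> (1 + \<epsilon>) * (norm (a - b))\<^sup>2"
    if "a \<in> U" "b \<in> U" for a b
    using L that by (simp add: near_isometric_on_def)
  have polar: "(norm (a - b))\<^sup>2 = (norm a)\<^sup>2 + (norm b)\<^sup>2 - 2 * inner a b" for a b :: "'c::real_inner"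
    by (simp add: power2_norm_eq_inner inner_diff_left inner_diff_right inner_commute)
  have "(norm (u - w))\<^sup>2 \<le> 2 * ((norm u)\<^sup>2 + (norm w)\<^sup>2)"
    using polar[of u w] Cauchy_Schwarz_ineq2[of u w] sum_squares_bound[of "norm u" "norm w"]
    by (simp add: abs_le_iff power2_eq_square)
  then have "\<epsilon> * (norm (u - w))\<^sup>2 \<le> \<epsilon> * (2 * ((norm u)\<^sup>2 + (norm w)\<^sup>2))"
    using \<open>0 \<le> \<epsilon>\<close> by (rule mult_left_mono)
  then show ?thesis
    using near[of u 0] near[of w 0] near[of u w] polar[of u w] polar[of "L u" "L w"] assms(2-5)
    by (simp add: abs_le_iff algebra_simps)
qed

lemma Tmap_inner_diff_le:
  assumes L: "near_isometric_on \<epsilon> U ((*v) S)" and "0 \<in> U" "0 \<le> \<epsilon>"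
    and FU: "\<And>i b. F i b \<in> U" and GU: "\<And>i b. G i b \<in> U"
    and h: "\<And>i b. block h i b = r *\<^sub>R F i b" and h': "\<And>i b. block h' i b = r' *\<^sub>R G i b"
  shows "\<bar>inner (Tmap S h) (Tmap S h') - inner h h'\<bar>
    \<le> \<bar>r * r'\<bar> * (3/2 * \<epsilon> * (\<Sum>i\<in>UNIV. \<Sum>b\<in>UNIV. (norm (F i b))\<^sup>2 + (norm (G i b))\<^sup>2))"
proof -
  define D where "D i b = inner (S *v F i b) (S *v G i b) - inner (F i b) (G i b)" for i b
  have "inner (Tmap S h) (Tmap S h') - inner h h' = r * r' * (\<Sum>i\<in>UNIV. \<Sum>b\<in>UNIV. D i b)"
    by (simp add: inner_block_sum h h' D_def matrix_vector_mult_scaleR sum_distrib_left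
        algebra_simps sum_subtractf)
  moreover have "\<bar>\<Sum>i\<in>UNIV. \<Sum>b\<in>UNIV. D i b\<bar>
      \<le> 3/2 * \<epsilon> * (\<Sum>i\<in>UNIV. \<Sum>b\<in>UNIV. (norm (F i b))\<^sup>2 + (norm (G i b))\<^sup>2)"
  proof -
    have "\<bar>\<Sum>i\<in>UNIV. \<Sum>b\<in>UNIV. D i b\<bar> \<le> (\<Sum>i\<in>UNIV. \<Sum>b\<in>UNIV. \<bar>D i b\<bar>)"
      by (rule order_trans[OF sum_abs]) (intro sum_mono sum_abs)
    also have "\<dots> \<le> (\<Sum>i\<in>UNIV. \<Sum>b\<in>UNIV. 3/2 * \<epsilon> * ((norm (F i b))\<^sup>2 + (norm (G i b))\<^sup>2))"
      unfolding D_def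
      by (intro sum_mono near_isometric_on_inner[OF L] FU GU) (use assms(2,3) in auto)
    finally show ?thesis
      by (simp add: sum_distrib_left)
  qed
  ultimately show ?thesis
    by (simp only: abs_mult) (intro mult_left_mono; simp)
qed

lemma orth_proj_characterization:
  fixes W :: "'a::euclidean_space set"
  shows "orth_proj W v \<in> span W \<and> (\<forall>w\<in>W. inner (v - orth_proj W v) w = 0)"
proof -
  obtain p z where p: "p \<in> span W" and z: "\<And>w. w \<in> span W \<Longrightarrow> orthogonal z w" and v: "v = p + z"
    using orthogonal_subspace_decomp_exists by blast
  have p_proj: "p \<in> span W \<and> (\<forall>w\<in>W. inner (v - p) w = 0)"
    using p z v by (auto simp: orthogonal_def span_base)
  have unique: "q = p" if q: "q \<in> span W \<and> (\<forall>w\<in>W. inner (v - q) w = 0)" for q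
  proof -
    have "orthogonal (q - p) w" if "w \<in> W" for w
      using q p_proj that by (simp add: orthogonal_def inner_diff_left algebra_simps)
    then have "orthogonal (q - p) (q - p)"
      using orthogonal_to_span q p span_diff by blast
    then show ?thesis
      by (simp add: orthogonal_def)
  qed
  show ?thesis
    unfolding orth_proj_def using p_proj unique by (rule theI)
qed

lemma orth_proj_in_span: "orth_proj W v \<in> span W"
  for W :: "'a::euclidean_space set"
  using orth_proj_characterization by blast

lemma orth_proj_orthogonal_span:
  fixes W :: "'a::euclidean_space set"
  assumes "w \<in> span W"
  shows "inner (v - orth_proj W v) w = 0"
  using orth_proj_characterization[of W v] orthogonal_to_span[OF assms, of "v - orth_proj W v"]
  by (simp add: orthogonal_def inner_commute)

lemma span_image_sum_repr:
  assumes "finite I" "p \<in> span (g ` I)"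
  obtains \<beta> where "p = (\<Sum>j\<in>I. \<beta> j *\<^sub>R g j)"
  using assms
proof (induction I arbitrary: p thesis rule: finite_induct)
  case empty
  then show ?case by simp
next
  case (insert j I)
  obtain k where "p - k *\<^sub>R g j \<in> span (g ` I)"
    using insert.prems(2) span_insert[of "g j" "g ` I"] by auto
  then obtain \<beta> where \<beta>: "p - k *\<^sub>R g j = (\<Sum>l\<in>I. \<beta> l *\<^sub>R g l)"
    using insert.IH by blast
  have "(\<Sum>l\<in>I. (\<beta>(j := k)) l *\<^sub>R g l) = (\<Sum>l\<in>I. \<beta> l *\<^sub>R g l)"
    using insert.hyps(2) by (intro sum.cong) auto
  then have "p = (\<Sum>l\<in>insert j I. (\<beta>(j := k)) l *\<^sub>R g l)"
    using insert.hyps \<beta> by (simp add: algebra_simps)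
  then show ?case
    by (rule insert.prems(1))
qed

lemma inner_sum_le_l1_bound:
  assumes "\<And>j. j \<in> I \<Longrightarrow> \<bar>inner (g j) \<phi>\<bar> \<le> B"
  shows "inner (\<Sum>j\<in>I. \<beta> j *\<^sub>R g j) \<phi> \<le> (\<Sum>j\<in>I. \<bar>\<beta> j\<bar>) * B"
proof -
  have "inner (\<Sum>j\<in>I. \<beta> j *\<^sub>R g j) \<phi> = (\<Sum>j\<in>I. \<beta> j * inner (g j) \<phi>)"
    by (simp add: inner_sum_left)
  also have "\<dots> \<le> (\<Sum>j\<in>I. \<bar>\<beta> j\<bar> * B)"
  proof (rule sum_mono)
    fix j assume "j \<in> I"
    have "\<beta> j * inner (g j) \<phi> \<le> \<bar>\<beta> j\<bar> * \<bar>inner (g j) \<phi>\<bar>"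
      by (metis abs_ge_self abs_mult)
    also have "\<dots> \<le> \<bar>\<beta> j\<bar> * B"
      using assms[OF \<open>j \<in> I\<close>] by (simp add: mult_left_mono)
    finally show "\<beta> j * inner (g j) \<phi> \<le> \<bar>\<beta> j\<bar> * B" .
  qed
  finally show ?thesis
    by (simp add: sum_distrib_right)
qed

lemma norm_sq_sum_ge_near_orthonormal:
  fixes g :: "'i \<Rightarrow> 'a::real_inner"
  assumes "finite I"
    and gram: "\<And>j l. j \<in> I \<Longrightarrow> l \<in> I \<Longrightarrow> \<bar>inner (g j) (g l) - (if j = l then 1 else 0)\<bar> \<le> \<delta>"
  shows "(\<Sum>j\<in>I. (\<beta> j)\<^sup>2) - \<delta> * (\<Sum>j\<in>I. \<bar>\<beta> j\<bar>)\<^sup>2 \<le> (norm (\<Sum>j\<in>I. \<beta> j *\<^sub>R g j))\<^sup>2"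
proof -
  define e where "e j l = inner (g j) (g l) - (if j = l then 1 else 0)" for j l
  have diagonal: "(\<Sum>l\<in>I. \<beta> j * \<beta> l * (if j = l then 1 else 0)) = (\<beta> j)\<^sup>2" if "j \<in> I" for j
  proof -
    have "(\<Sum>l\<in>I. \<beta> j * \<beta> l * (if j = l then 1 else 0)) = (\<Sum>l\<in>I. if j = l then \<beta> j * \<beta> l else 0)"
      by (rule sum.cong) auto
    then show ?thesis
      using that \<open>finite I\<close> by (simp add: power2_eq_square)
  qed
  have "(norm (\<Sum>j\<in>I. \<beta> j *\<^sub>R g j))\<^sup>2 = (\<Sum>l\<in>I. \<Sum>j\<in>I. \<beta> j * \<beta> l * inner (g j) (g l))"
    unfolding power2_norm_eq_inner inner_sum_left inner_sum_right by (simp add: algebra_simps)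
  also have "\<dots> = (\<Sum>j\<in>I. \<Sum>l\<in>I. \<beta> j * \<beta> l * ((if j = l then 1 else 0) + e j l))"
    by (subst sum.swap) (simp add: e_def)
  also have "\<dots> = (\<Sum>j\<in>I. (\<beta> j)\<^sup>2) + (\<Sum>j\<in>I. \<Sum>l\<in>I. \<beta> j * \<beta> l * e j l)"
    using diagonal by (simp add: distrib_left sum.distrib)
  finally have norm_eq: "(norm (\<Sum>j\<in>I. \<beta> j *\<^sub>R g j))\<^sup>2 = \<dots>" .
  have "(\<Sum>j\<in>I. \<Sum>l\<in>I. - \<delta> * (\<bar>\<beta> j\<bar> * \<bar>\<beta> l\<bar>)) \<le> (\<Sum>j\<in>I. \<Sum>l\<in>I. \<beta> j * \<beta> l * e j l)"
  proof (intro sum_mono)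
    fix j l assume "j \<in> I" "l \<in> I"
    then have "\<bar>\<beta> j * \<beta> l\<bar> * \<bar>e j l\<bar> \<le> \<bar>\<beta> j * \<beta> l\<bar> * \<delta>"
      using gram by (simp add: e_def mult_left_mono)
    then have "\<bar>\<beta> j * \<beta> l * e j l\<bar> \<le> \<delta> * (\<bar>\<beta> j\<bar> * \<bar>\<beta> l\<bar>)"
      by (simp add: abs_mult algebra_simps)
    then show "- \<delta> * (\<bar>\<beta> j\<bar> * \<bar>\<beta> l\<bar>) \<le> \<beta> j * \<beta> l * e j l"
      using abs_ge_minus_self[of "\<beta> j * \<beta> l * e j l"] by linarith
  qed
  moreover have "(\<Sum>j\<in>I. \<Sum>l\<in>I. - \<delta> * (\<bar>\<beta> j\<bar> * \<bar>\<beta> l\<bar>)) = - \<delta> * (\<Sum>j\<in>I. \<bar>\<beta> j\<bar>)\<^sup>2"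
    by (simp only: power2_eq_square sum_product) (simp add: sum_distrib_left)
  ultimately show ?thesis
    unfolding norm_eq by linarith
qed

lemma norm_sq_le_near_orthonormal:
  fixes g :: "'i \<Rightarrow> 'a::real_inner" and \<delta> B :: real
  assumes "finite I"
    and p: "p \<in> span (g ` I)"
    and orth: "\<And>j. j \<in> I \<Longrightarrow> inner (\<phi> - p) (g j) = 0"
    and gram: "\<And>j l. j \<in> I \<Longrightarrow> l \<in> I \<Longrightarrow> \<bar>inner (g j) (g l) - (if j = l then 1 else 0)\<bar> \<le> \<delta>"
    and bound: "\<And>j. j \<in> I \<Longrightarrow> \<bar>inner (g j) \<phi>\<bar> \<le> B"
    and small: "\<delta> * card I \<le> 1/4"
  shows "(norm p)\<^sup>2 \<le> 4/3 * card I * B\<^sup>2"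
proof -
  obtain \<beta> where \<beta>: "p = (\<Sum>j\<in>I. \<beta> j *\<^sub>R g j)"
    using span_image_sum_repr[OF \<open>finite I\<close> p] by blast
  define k where "k = real (card I)"
  define P where "P = (norm p)\<^sup>2"
  define l1 where "l1 = (\<Sum>j\<in>I. \<bar>\<beta> j\<bar>)"
  define q where "q = (\<Sum>j\<in>I. (\<beta> j)\<^sup>2)"
  have "inner (\<phi> - p) (\<Sum>j\<in>I. \<beta> j *\<^sub>R g j) = 0"
    using orth by (simp add: inner_sum_right)
  then have "inner (\<phi> - p) p = 0"
    by (simp only: \<beta>[symmetric])
  then have "P = inner p \<phi>"
    by (simp add: P_def power2_norm_eq_inner inner_diff_left inner_commute[of \<phi> p])
  then have upper: "P \<le> l1 * B"
    using inner_sum_le_l1_bound[OF bound] by (simp add: \<beta> l1_def)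
  have lower: "q - \<delta> * l1\<^sup>2 \<le> P"
    using norm_sq_sum_ge_near_orthonormal[OF \<open>finite I\<close> gram] by (simp add: P_def q_def l1_def \<beta>)
  have cauchy_schwarz: "l1\<^sup>2 \<le> k * q"
    using Cauchy_Schwarz_ineq_sum[of "\<lambda>_. 1" "\<lambda>j. \<bar>\<beta> j\<bar>" I] by (simp add: l1_def q_def k_def)
  have "k * (\<delta> * l1\<^sup>2) = (\<delta> * k) * l1\<^sup>2"
    by (simp add: algebra_simps)
  also have "\<dots> \<le> 1/4 * l1\<^sup>2"
    using small by (intro mult_right_mono) (auto simp: k_def)
  finally have quarter: "k * (\<delta> * l1\<^sup>2) \<le> 1/4 * l1\<^sup>2" .
  have "k * q \<le> k * (P + \<delta> * l1\<^sup>2)"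
    using lower by (intro mult_left_mono) (auto simp: k_def)
  then have l1_sq: "l1\<^sup>2 \<le> 4/3 * k * P"
    using cauchy_schwarz quarter by (simp add: algebra_simps)
  have P0: "0 \<le> P"
    by (simp add: P_def)
  have "P * P \<le> (l1 * B) * (l1 * B)"
    using upper P0 by (intro mult_mono) linarith+
  also have "\<dots> = l1\<^sup>2 * B\<^sup>2"
    by (simp add: power2_eq_square)
  also have "\<dots> \<le> (4/3 * k * P) * B\<^sup>2"
    using l1_sq by (rule mult_right_mono) simp
  finally have "P * P \<le> (4/3 * k * B\<^sup>2) * P"
    by (simp add: algebra_simps)
  then have "P \<le> 4/3 * k * B\<^sup>2"
    using P0 by (cases "P = 0") (auto simp: k_def mult_le_cancel_right)
  then show ?thesis
    by (simp add: P_def k_def)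
qed

lemma fst_psi_un [simp]: "fst (psi_un c A v x) = 1"
  by (simp add: psi_un_def hat0_def)

lemma fst_phi_un [simp]: "fst (phi_un c A v x) = 1"
  by (simp add: phi_un_def hat0_def)

lemma block_psi_un [simp]:
  "block (psi_un c A v x) i b = (1 / sqrt (c * A)) *\<^sub>R (if x i = b then v x i else 0)"
  by (simp add: psi_un_def)

lemma block_phi_un [simp]:
  "block (phi_un c A v x) i b = - sqrt (c * A) *\<^sub>R (if x i \<noteq> b then v x i else 0)"
  by (simp add: phi_un_def)

lemma one_le_nu: "1 \<le> nu c A v x"
  unfolding nu_def norm_sq_block_sum by (simp add: sum_nonneg)

lemma one_le_mu: "1 \<le> mu c A v x"
  unfolding mu_def norm_sq_block_sum by (simp add: sum_nonneg)

lemma inner_psi_un_phi_un: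
  assumes "0 < c * A"
  shows "inner (psi_un c A v x) (phi_un c A v y) = 1 - (\<Sum>i\<in>{i. x i \<noteq> y i}. inner (v x i) (v y i))"
proof -
  have "(\<Sum>b\<in>UNIV. inner (if x i = b then v x i else 0) (if y i \<noteq> b then v y i else 0))
      = (if x i \<noteq> y i then inner (v x i) (v y i) else 0)" for i
    by (cases "x i"; cases "y i") (simp_all add: UNIV_bool)
  moreover have "c \<noteq> 0" "A \<noteq> 0"
    using assms by auto
  ultimately show ?thesis
    by (simp add: inner_block_sum sum_negf sum.If_cases)
qed

locale jl_compressed_reflection =
  fixes X :: "('n::finite \<Rightarrow> bool) set" and f :: "('n \<Rightarrow> bool) \<Rightarrow> bool"
    and c A \<epsilon> :: real and v :: "('n \<Rightarrow> bool) \<Rightarrow> 'n \<Rightarrow> real^'m::finite" and \<kappa> :: nat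
    and \<zeta> :: "nat \<Rightarrow> real \<times> (real^('n \<times> 'm \<times> bool))" and \<alpha> :: "nat \<Rightarrow> ('n \<Rightarrow> bool) \<Rightarrow> real"
    and S :: "real^'m^'N::finite" and C :: "nat \<Rightarrow> 'n \<Rightarrow> bool \<Rightarrow> real^'m"
  assumes c_pos: "0 < c"
    and deciding: "\<And>x y. x \<in> X \<Longrightarrow> y \<in> X \<Longrightarrow> f x \<noteq> f y \<Longrightarrow>
      (\<Sum>i\<in>{i. x i \<noteq> y i}. inner (v x i) (v y i)) = 1"
    and size_le: "\<And>x. x \<in> X \<Longrightarrow> (\<Sum>i\<in>UNIV. (norm (v x i))\<^sup>2) \<le> A"
    and zeta_orthonormal: "\<And>j k. j < \<kappa> \<Longrightarrow> k < \<kappa> \<Longrightarrow> inner (\<zeta> j) (\<zeta> k) = (if j = k then 1 else 0)"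
    and zeta_span: "span (\<zeta> ` {..<\<kappa>}) = span (psi c A v ` {x \<in> X. f x})"
    and zeta_alpha: "\<And>j. j < \<kappa> \<Longrightarrow> \<zeta> j = (\<Sum>x\<in>{x \<in> X. f x}. \<alpha> j x *\<^sub>R psi c A v x)"
    and C_def: "\<And>j i b. C j i b = (\<Sum>x\<in>{x \<in> X. f x \<and> x i = b}. (\<alpha> j x / sqrt (nu c A v x)) *\<^sub>R v x i)"
    and eps_pos: "0 < \<epsilon>"
    and near_isometric:
      "near_isometric_on \<epsilon> ({C j i b | j i b. j < \<kappa>} \<union> {v y i | y i. y \<in> X \<and> \<not> f y} \<union> {0}) ((*v) S)"
begin

lemma finite_X: "finite X"
  by (rule finite_subset[of _ UNIV]) auto

lemma A_pos:
  assumes "x \<in> X" "y \<in> X" "f x \<noteq> f y"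
  shows "0 < A"
proof -
  obtain i where "v x i \<noteq> 0"
    using deciding[OF assms] by (metis (no_types, lifting) inner_zero_left sum.neutral zero_neq_one)
  then have "0 < (norm (v x i))\<^sup>2"
    by simp
  also have "\<dots> \<le> (\<Sum>i\<in>UNIV. (norm (v x i))\<^sup>2)"
    by (rule member_le_sum) auto
  also have "\<dots> \<le> A"
    using size_le[OF assms(1)] .
  finally show ?thesis .
qed

lemma accepted_nonempty:
  assumes "j < \<kappa>"
  shows "{x \<in> X. f x} \<noteq> {}"
proof
  assume none: "{x \<in> X. f x} = {}"
  have "\<zeta> j = 0"
    using zeta_alpha[OF assms] by (simp only: none sum.empty)
  then show False
    using zeta_orthonormal[OF assms assms] by simp
qed

lemma block_zeta:
  assumes "j < \<kappa>"
  shows "block (\<zeta> j) i b = (1 / sqrt (c * A)) *\<^sub>R C j i b"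
proof -
  have "C j i b = (\<Sum>x\<in>{x \<in> {x \<in> X. f x}. x i = b}. (\<alpha> j x / sqrt (nu c A v x)) *\<^sub>R v x i)"
    unfolding C_def by (rule sum.cong) auto
  also have "\<dots> = (\<Sum>x\<in>{x \<in> X. f x}. if x i = b then (\<alpha> j x / sqrt (nu c A v x)) *\<^sub>R v x i else 0)"
    using finite_X by (intro sum.inter_filter) simp
  finally have "C j i b = \<dots>" .
  then have C_eq: "(1 / sqrt (c * A)) *\<^sub>R C j i b
      = (\<Sum>x\<in>{x \<in> X. f x}. \<alpha> j x *\<^sub>R block (psi c A v x) i b)"
    by (simp add: psi_def scaleR_sum_right) (rule sum.cong; simp)
  show ?thesis
    unfolding C_eq zeta_alpha[OF assms] by simp
qed

lemma inner_zeta_phi: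
  assumes "j < \<kappa>" "y \<in> X" "\<not> f y"
  shows "inner (\<zeta> j) (phi c A v y) = 0"
proof -
  have "inner (psi c A v x) (phi c A v y) = 0" if "x \<in> X" "f x" for x
  proof -
    have "0 < c * A"
      using c_pos A_pos[OF that(1) assms(2)] that(2) assms(3) by simp
    then show ?thesis
      using deciding[OF that(1) assms(2)] that(2) assms(3)
      by (simp add: psi_def phi_def inner_psi_un_phi_un)
  qed
  then show ?thesis
    by (simp add: zeta_alpha[OF assms(1)] inner_sum_left)
qed

lemma sum_norm_C_le:
  assumes "j < \<kappa>" "0 < A"
  shows "(\<Sum>i\<in>UNIV. \<Sum>b\<in>UNIV. (norm (C j i b))\<^sup>2) \<le> c * A"
proof -
  have "(\<Sum>i\<in>UNIV. \<Sum>b\<in>UNIV. (norm (C j i b))\<^sup>2) / (c * A)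
      = (\<Sum>i\<in>UNIV. \<Sum>b\<in>UNIV. (norm (block (\<zeta> j) i b))\<^sup>2)"
    using c_pos assms by (simp add: block_zeta power_divide sum_divide_distrib)
  also have "\<dots> \<le> (norm (\<zeta> j))\<^sup>2"
    unfolding norm_sq_block_sum[of "\<zeta> j"] by simp
  also have "\<dots> = 1"
    using zeta_orthonormal[OF assms(1) assms(1)] by (simp add: power2_norm_eq_inner)
  finally show ?thesis
    using c_pos assms(2) by (simp add: divide_le_eq)
qed

lemma near_orthonormal_Tmap_zeta:
  assumes "j < \<kappa>" "k < \<kappa>" "0 < A"
  shows "\<bar>inner (Tmap S (\<zeta> j)) (Tmap S (\<zeta> k)) - (if j = k then 1 else 0)\<bar> \<le> 3 * \<epsilon>"
proof -
  have "\<bar>inner (Tmap S (\<zeta> j)) (Tmap S (\<zeta> k)) - inner (\<zeta> j) (\<zeta> k)\<bar>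
      \<le> \<bar>1 / sqrt (c * A) * (1 / sqrt (c * A))\<bar>
         * (3/2 * \<epsilon> * (\<Sum>i\<in>UNIV. \<Sum>b\<in>UNIV. (norm (C j i b))\<^sup>2 + (norm (C k i b))\<^sup>2))"
    using assms eps_pos
    by (intro Tmap_inner_diff_le[OF near_isometric]) (auto simp: block_zeta)
  also have "\<dots> = 1 / (c * A) * (3/2 * \<epsilon> * (\<Sum>i\<in>UNIV. \<Sum>b\<in>UNIV. (norm (C j i b))\<^sup>2 + (norm (C k i b))\<^sup>2))"
    using c_pos assms(3) by (simp add: abs_mult)
  also have "\<dots> \<le> 1 / (c * A) * (3/2 * \<epsilon> * (c * A + c * A))"
  proof -
    have "(\<Sum>i\<in>UNIV. \<Sum>b\<in>UNIV. (norm (C j i b))\<^sup>2 + (norm (C k i b))\<^sup>2) \<le> c * A + c * A"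
      unfolding sum.distrib using sum_norm_C_le[OF assms(1,3)] sum_norm_C_le[OF assms(2,3)] by (rule add_mono)
    then show ?thesis
      using c_pos assms(3) eps_pos by (intro mult_left_mono) auto
  qed
  also have "\<dots> = 3 * \<epsilon>"
    using c_pos assms(3) by simp
  finally show ?thesis
    using zeta_orthonormal[OF assms(1,2)] by simp
qed

lemma inner_Tmap_zeta_phi_le:
  assumes "j < \<kappa>" "y \<in> X" "\<not> f y"
  shows "\<bar>inner (Tmap S (\<zeta> j)) (Tmap S (phi c A v y))\<bar> \<le> 3/2 * \<epsilon> * (c + 1) * A"
proof -
  define G where "G i b = (if y i \<noteq> b then v y i else 0)" for i b
  obtain x where "x \<in> X" "f x"
    using accepted_nonempty[OF assms(1)] by blast
  then have A: "0 < A"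
    using A_pos assms(2,3) by metis
  have G_norm: "(\<Sum>i\<in>UNIV. \<Sum>b\<in>UNIV. (norm (G i b))\<^sup>2) \<le> A"
  proof -
    have "(\<Sum>b\<in>UNIV. (norm (G i b))\<^sup>2) = (norm (v y i))\<^sup>2" for i
      by (cases "y i") (simp_all add: G_def UNIV_bool)
    then show ?thesis
      using size_le[OF assms(2)] by simp
  qed
  have mu: "1 / sqrt (mu c A v y) \<le> 1"
    using one_le_mu[of c A v y] by simp
  have "\<bar>inner (Tmap S (\<zeta> j)) (Tmap S (phi c A v y)) - inner (\<zeta> j) (phi c A v y)\<bar>
      \<le> \<bar>1 / sqrt (c * A) * (- sqrt (c * A) / sqrt (mu c A v y))\<bar>
         * (3/2 * \<epsilon> * (\<Sum>i\<in>UNIV. \<Sum>b\<in>UNIV. (norm (C j i b))\<^sup>2 + (norm (G i b))\<^sup>2))"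
    using assms eps_pos
    by (intro Tmap_inner_diff_le[OF near_isometric]) (auto simp: block_zeta phi_def G_def)
  also have "\<dots> = 1 / sqrt (mu c A v y) * (3/2 * \<epsilon> * (\<Sum>i\<in>UNIV. \<Sum>b\<in>UNIV. (norm (C j i b))\<^sup>2 + (norm (G i b))\<^sup>2))"
    using c_pos A one_le_mu[of c A v y] by (simp add: abs_mult)
  also have "\<dots> \<le> 1 * (3/2 * \<epsilon> * (c * A + A))"
  proof -
    have "(\<Sum>i\<in>UNIV. \<Sum>b\<in>UNIV. (norm (C j i b))\<^sup>2 + (norm (G i b))\<^sup>2) \<le> c * A + A"
      unfolding sum.distrib using sum_norm_C_le[OF assms(1) A] G_norm by (rule add_mono)
    moreover have "0 \<le> (\<Sum>i\<in>UNIV. \<Sum>b\<in>UNIV. (norm (C j i b))\<^sup>2 + (norm (G i b))\<^sup>2)"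
      by (intro sum_nonneg) auto
    ultimately show ?thesis
      using mu eps_pos by (intro mult_mono) auto
  qed
  finally show ?thesis
    using inner_zeta_phi[OF assms] by (simp add: algebra_simps)
qed

lemma span_Tmap_psi:
  "span (Tmap S ` psi c A v ` {x \<in> X. f x}) = span ((\<lambda>j. Tmap S (\<zeta> j)) ` {..<\<kappa>})"
proof -
  have "(\<lambda>j. Tmap S (\<zeta> j)) ` {..<\<kappa>} = Tmap S ` \<zeta> ` {..<\<kappa>}"
    by (simp add: image_image)
  then show ?thesis
    by (simp add: span_linear_image[OF linear_Tmap] zeta_span)
qed

lemma norm_sq_orth_proj_le:
  assumes y: "y \<in> X" "\<not> f y" and small: "\<epsilon> * \<kappa> < 1/12"
  defines "W \<equiv> Tmap S ` psi c A v ` {x \<in> X. f x}" and "\<phi>' \<equiv> Tmap S (phi c A v y)"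
  shows "(norm (orth_proj W \<phi>'))\<^sup>2 \<le> 3 * \<kappa> * (\<epsilon> * (c + 1) * A)\<^sup>2"
proof -
  define g where "g j = Tmap S (\<zeta> j)" for j
  define p where "p = orth_proj W \<phi>'"
  define B where "B = 3/2 * \<epsilon> * (c + 1) * A"
  have span_W: "span W = span (g ` {..<\<kappa>})"
    using span_Tmap_psi by (simp add: W_def g_def)
  have A_pos_if_kappa: "0 < A" if "j < \<kappa>" for j
    using accepted_nonempty[OF that] A_pos y by blast
  have "(norm p)\<^sup>2 \<le> 4/3 * card {..<\<kappa>} * B\<^sup>2"
  proof (rule norm_sq_le_near_orthonormal)
    show "p \<in> span (g ` {..<\<kappa>})"
      using orth_proj_in_span[of W \<phi>'] span_W by (simp add: p_def)
    show "inner (\<phi>' - p) (g j) = 0" if "j \<in> {..<\<kappa>}" for j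
      unfolding p_def using that span_W by (intro orth_proj_orthogonal_span) (simp add: span_base)
    show "\<bar>inner (g j) (g l) - (if j = l then 1 else 0)\<bar> \<le> 3 * \<epsilon>" if "j \<in> {..<\<kappa>}" "l \<in> {..<\<kappa>}" for j l
      using that A_pos_if_kappa by (simp add: g_def near_orthonormal_Tmap_zeta)
    show "\<bar>inner (g j) \<phi>'\<bar> \<le> B" if "j \<in> {..<\<kappa>}" for j
      using that inner_Tmap_zeta_phi_le[OF _ y] by (simp add: g_def \<phi>'_def B_def)
    show "3 * \<epsilon> * card {..<\<kappa>} \<le> 1/4"
      using small by simp
  qed simp
  then show ?thesis
    by (simp add: p_def B_def power2_eq_square algebra_simps)
qed

theorem norm_add_reflection_le:
  assumes y: "y \<in> X" "\<not> f y" and small: "\<epsilon> * \<kappa> < 1/12"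
  defines "W \<equiv> Tmap S ` psi c A v ` {x \<in> X. f x}" and "\<phi>' \<equiv> Tmap S (phi c A v y)"
  shows "norm (\<phi>' + (2 *\<^sub>R orth_proj W \<phi>' - \<phi>')) \<le> 8 * \<epsilon> * (c + 1) * A * sqrt \<kappa>"
proof -
  have "(2 * norm (orth_proj W \<phi>'))\<^sup>2 = 4 * (norm (orth_proj W \<phi>'))\<^sup>2"
    by (simp add: power2_eq_square)
  also have "\<dots> \<le> 4 * (3 * \<kappa> * (\<epsilon> * (c + 1) * A)\<^sup>2)"
    using norm_sq_orth_proj_le[OF y small] by (simp add: W_def \<phi>'_def)
  also have "\<dots> \<le> 64 * \<kappa> * (\<epsilon> * (c + 1) * A)\<^sup>2"
    by simp
  also have "\<dots> = (8 * \<epsilon> * (c + 1) * A * sqrt \<kappa>)\<^sup>2"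
    by (simp add: power_mult_distrib)
  finally have "(2 * norm (orth_proj W \<phi>'))\<^sup>2 \<le> (8 * \<epsilon> * (c + 1) * A * sqrt \<kappa>)\<^sup>2" .
  moreover have "0 \<le> A"
    using size_le[OF y(1)] sum_nonneg[of UNIV "\<lambda>i. (norm (v y i))\<^sup>2"] by simp
  then have "0 \<le> 8 * \<epsilon> * (c + 1) * A * sqrt \<kappa>"
    using c_pos eps_pos by simp
  ultimately have "2 * norm (orth_proj W \<phi>') \<le> 8 * \<epsilon> * (c + 1) * A * sqrt \<kappa>"
    by (rule power2_le_imp_le)
  then show ?thesis
    by simp
qed

end

theorem lemma13:
  fixes X :: "('n::finite \<Rightarrow> bool) set"
    and f :: "('n \<Rightarrow> bool) \<Rightarrow> bool"
    and c A \<epsilon> :: real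
    and v :: "('n \<Rightarrow> bool) \<Rightarrow> 'n \<Rightarrow> real^'m::finite"
    and \<kappa> :: nat
    and \<zeta> :: "nat \<Rightarrow> real \<times> (real^('n \<times> 'm \<times> bool))"
    and \<alpha> :: "nat \<Rightarrow> ('n \<Rightarrow> bool) \<Rightarrow> real"
    and S :: "real^'m^'N::finite"
  assumes c_pos: "c > 0"
    and deciding: "\<forall>x\<in>X. \<forall>y\<in>X. f x \<noteq> f y \<longrightarrow>
                     (\<Sum>i\<in>{i. x i \<noteq> y i}. inner (v x i) (v y i)) = 1"
    and A_def: "A = Max {(\<Sum>i\<in>UNIV. (norm (v x i))\<^sup>2) | x. x \<in> X}"
    and kappa_def: "\<kappa> = dim (psi c A v ` {x \<in> X. f x})"
    and zeta_orthonormal: "\<forall>j<\<kappa>. \<forall>k<\<kappa>. inner (\<zeta> j) (\<zeta> k) = (if j = k then 1 else 0)"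
    and zeta_span: "span (\<zeta> ` {..<\<kappa>}) = span (psi c A v ` {x \<in> X. f x})"
    and zeta_alpha: "\<forall>j<\<kappa>. \<zeta> j = (\<Sum>x\<in>{x \<in> X. f x}. \<alpha> j x *\<^sub>R psi c A v x)"
    and eps_pos: "\<epsilon> > 0"
    and JL: "let C = (\<lambda>j i b. \<Sum>x\<in>{x \<in> X. f x \<and> x i = b}. (\<alpha> j x / sqrt (nu c A v x)) *\<^sub>R v x i);
                 V = {C j i b | j i b. j < \<kappa>} \<union> {v y i | y i. y \<in> X \<and> \<not> f y}
             in \<forall>u\<in>V \<union> {0}. \<forall>w\<in>V \<union> {0}.
                  (1 - \<epsilon>) * (norm (u - w))\<^sup>2 \<le> (norm (S *v u - S *v w))\<^sup>2 \<and>
                  (norm (S *v u - S *v w))\<^sup>2 \<le> (1 + \<epsilon>) * (norm (u - w))\<^sup>2"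
    and small: "\<epsilon> * real \<kappa> < 1 / 12"
  shows "\<forall>x\<in>X. \<not> f x \<longrightarrow>
           (let W = Tmap S ` psi c A v ` {x \<in> X. f x};
                R = (\<lambda>h. 2 *\<^sub>R orth_proj W h - h);
                \<phi>' = Tmap S (phi c A v x)
            in norm (\<phi>' + R \<phi>') \<le> 8 * \<epsilon> * (c + 1) * A * sqrt (real \<kappa>))"
proof -
  have "finite X"
    by (rule finite_subset[of _ UNIV]) auto
  interpret jl_compressed_reflection X f c A \<epsilon> v \<kappa> \<zeta> \<alpha> S
    "\<lambda>j i b. \<Sum>x\<in>{x \<in> X. f x \<and> x i = b}. (\<alpha> j x / sqrt (nu c A v x)) *\<^sub>R v x i"
  proof unfold_locales
    show "(\<Sum>i\<in>UNIV. (norm (v x i))\<^sup>2) \<le> A" if "x \<in> X" for x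
      unfolding A_def using \<open>finite X\<close> that by (intro Max_ge) auto
  qed (use assms in \<open>simp_all add: Let_def near_isometric_on_def\<close>)
  show ?thesis
    using norm_add_reflection_le[OF _ _ small] by (simp add: Let_def)
qed

end
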